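(* Let $A\in\mathrm{GL}_{n}(\mathbb{Z})$. If the group $G=\mathbb{Z}^{n}\rtimes_{A}\mathbb{Z}$ admits a length function which is both discrete and purely positive, then $G$ is virtually abelian.
   Context: $\mathbb{Z}^{n}\rtimes_{A}\mathbb{Z}$ is the semidirect product in which a generator of $\mathbb{Z}$ acts on $\mathbb{Z}^n$ by $A$. A length function on a group $G$ is a function $l:G\to[0,\infty)$ such that $l(g^{n})=|n|\,l(g)$ for all $g\in G,n\in\mathbb{Z}$; $l(hgh^{-1})=l(g)$ for all $g,h$; and $l(ab)\leq l(a)+l(b)$ whenever $a,b$ commute. It is purely positive if $l(g)>0$ for every element of infinite order, and discrete if there is $c>0$ with $l(g)>c$ whenever $l(g)\neq 0$. *)

theory Defs
  imports "HOL-Analysis.Analysis" "HOL-Algebra.Algebra"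
begin

definition mat_npow :: "int^'n^'n \<Rightarrow> nat \<Rightarrow> int^'n^'n" where
  "mat_npow A m = ((\<lambda>M. M ** A) ^^ m) (mat 1)"

definition mat_ipow :: "int^'n^'n \<Rightarrow> int \<Rightarrow> int^'n^'n" where
  "mat_ipow A k = (if 0 \<le> k then mat_npow A (nat k) else mat_npow (matrix_inv A) (nat (- k)))"

text \<open>The semidirect product Z^n \<rtimes>_A Z: elements (v,k), with
  (v,k)(w,m) = (v + A^k w, k + m); the generator (0,1) of Z acts on Z^n by A.\<close>
definition sdprod :: "int^'n^'n \<Rightarrow> ((int^'n) \<times> int) monoid" where
  "sdprod A = \<lparr> carrier = UNIV,
                mult = (\<lambda>(v, k) (w, m). (v + mat_ipow A k *v w, k + m)),
                one = (0, 0) \<rparr>"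

definition length_function :: "('a, 'b) monoid_scheme \<Rightarrow> ('a \<Rightarrow> real) \<Rightarrow> bool" where
  "length_function G l \<longleftrightarrow>
     (\<forall>g\<in>carrier G. 0 \<le> l g) \<and>
     (\<forall>g\<in>carrier G. \<forall>n::int. l (g [^]\<^bsub>G\<^esub> n) = \<bar>real_of_int n\<bar> * l g) \<and>
     (\<forall>g\<in>carrier G. \<forall>h\<in>carrier G. l (h \<otimes>\<^bsub>G\<^esub> g \<otimes>\<^bsub>G\<^esub> inv\<^bsub>G\<^esub> h) = l g) \<and>
     (\<forall>a\<in>carrier G. \<forall>b\<in>carrier G. a \<otimes>\<^bsub>G\<^esub> b = b \<otimes>\<^bsub>G\<^esub> a \<longrightarrow>
         l (a \<otimes>\<^bsub>G\<^esub> b) \<le> l a + l b)"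

definition infinite_order :: "('a, 'b) monoid_scheme \<Rightarrow> 'a \<Rightarrow> bool" where
  "infinite_order G g \<longleftrightarrow> (\<forall>n::nat. 0 < n \<longrightarrow> g [^]\<^bsub>G\<^esub> n \<noteq> \<one>\<^bsub>G\<^esub>)"

definition purely_positive :: "('a, 'b) monoid_scheme \<Rightarrow> ('a \<Rightarrow> real) \<Rightarrow> bool" where
  "purely_positive G l \<longleftrightarrow> (\<forall>g\<in>carrier G. infinite_order G g \<longrightarrow> 0 < l g)"

definition discrete_length :: "('a, 'b) monoid_scheme \<Rightarrow> ('a \<Rightarrow> real) \<Rightarrow> bool" where
  "discrete_length G l \<longleftrightarrow> (\<exists>c>0. \<forall>g\<in>carrier G. l g \<noteq> 0 \<longrightarrow> c < l g)"

definition virtually_abelian :: "('a, 'b) monoid_scheme \<Rightarrow> bool" where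
  "virtually_abelian G \<longleftrightarrow>
     (\<exists>H. subgroup H G \<and> finite (rcosets\<^bsub>G\<^esub> H) \<and>
          (\<forall>x\<in>H. \<forall>y\<in>H. x \<otimes>\<^bsub>G\<^esub> y = y \<otimes>\<^bsub>G\<^esub> x))"

end

theory Submission
  imports Defs
begin

text \<open>Restricted to the normal subgroup \<open>\<int>\<^sup>n\<close>, the length function gives
  \<open>L v = l (v, 0)\<close>, which is subadditive and homogeneous because \<open>\<int>\<^sup>n\<close> is abelian, and
  bounded below by the discreteness constant away from \<open>0\<close> by pure positivity. A pigeonhole
  argument modulo a large \<open>q\<close> shows that such an \<open>L\<close> has finite balls. Conjugation by the
  generator of \<open>\<int>\<close> shows that \<open>L\<close> is \<open>A\<close>-invariant, so all powers of \<open>A\<close> map the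
  standard basis into one finite ball; hence \<open>A\<^sup>m = 1\<close> for some \<open>m > 0\<close>, and then
  \<open>\<int>\<^sup>n \<rtimes> m\<int>\<close> is an abelian subgroup of index \<open>m\<close>.\<close>

lemma mat_npow_0 [simp]: "mat_npow A 0 = mat 1"
  by (simp add: mat_npow_def)

lemma mat_npow_Suc [simp]: "mat_npow A (Suc k) = mat_npow A k ** A"
  by (simp add: mat_npow_def)

lemma mat_npow_mat_1 [simp]: "mat_npow (mat 1) k = mat 1"
  by (induction k) simp_all

lemma mat_npow_add: "mat_npow A (a + b) = mat_npow A a ** mat_npow A b"
  by (induction b) (simp_all add: matrix_mul_assoc)

lemma mat_npow_Suc_left: "mat_npow A (Suc k) = A ** mat_npow A k"
  using mat_npow_add[of A 1 k] by simp

lemma mat_npow_mult: "mat_npow A (a * b) = mat_npow (mat_npow A a) b"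
proof (induction b)
  case (Suc b)
  have "mat_npow A (a * Suc b) = mat_npow A (a * b) ** mat_npow A a"
    using mat_npow_add[of A "a * b" a] by (simp add: add.commute)
  then show ?case using Suc by simp
qed simp

lemma mat_npow_eq_mat_1_dvd:
  assumes "mat_npow A m = mat 1" and "m dvd k"
  shows "mat_npow A k = mat 1"
  using assms by (auto simp: mat_npow_mult elim!: dvdE)

lemma mat_npow_cancel:
  assumes "B ** A = mat 1"
  shows "mat_npow B a ** mat_npow A a = mat 1"
proof (induction a)
  case (Suc a)
  have "mat_npow B (Suc a) ** mat_npow A (Suc a) = (mat_npow B a ** B) ** (A ** mat_npow A a)"
    by (simp only: mat_npow_Suc[of B] mat_npow_Suc_left[of A])
  also have "\<dots> = mat_npow B a ** (B ** A) ** mat_npow A a"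
    by (simp add: matrix_mul_assoc)
  finally show ?case using Suc assms by simp
qed simp

lemma matrix_inv_left:
  fixes A :: "'a::semiring_1^'n^'m"
  assumes "invertible A"
  shows "matrix_inv A ** A = mat 1"
  using someI_ex[OF assms[unfolded invertible_def]] by (simp add: matrix_inv_def)

lemma matrix_inv_right:
  fixes A :: "'a::semiring_1^'n^'m"
  assumes "invertible A"
  shows "A ** matrix_inv A = mat 1"
  using someI_ex[OF assms[unfolded invertible_def]] by (simp add: matrix_inv_def)

lemma mat_ipow_0 [simp]: "mat_ipow A 0 = mat 1"
  by (simp add: mat_ipow_def)

lemma mat_ipow_1 [simp]: "mat_ipow A 1 = A"
  by (simp add: mat_ipow_def)

lemma mat_ipow_mult_mat_ipow_uminus:
  assumes "invertible A"
  shows "mat_ipow A k ** mat_ipow A (- k) = mat 1"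
proof (cases "0 \<le> k")
  case True
  then show ?thesis
    using mat_npow_cancel[OF matrix_inv_right[OF assms], of "nat k"] by (simp add: mat_ipow_def)
next
  case False
  then show ?thesis
    using mat_npow_cancel[OF matrix_inv_left[OF assms], of "nat (- k)"] by (simp add: mat_ipow_def)
qed

lemma mat_ipow_eq_mat_1:
  assumes "invertible A" and A_m: "mat_npow A m = mat 1" and "int m dvd k"
  shows "mat_ipow A k = mat 1"
proof -
  have inv_m: "mat_npow (matrix_inv A) m = mat 1"
    using mat_npow_cancel[OF matrix_inv_left[OF assms(1)], of m] A_m by simp
  have "m dvd nat \<bar>k\<bar>"
    using assms(3) by simp
  then show ?thesis
    using mat_npow_eq_mat_1_dvd[OF A_m] mat_npow_eq_mat_1_dvd[OF inv_m]
    by (cases "0 \<le> k") (simp_all add: mat_ipow_def)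
qed

lemma matrix_vector_mult_uminus_right:
  fixes A :: "'a::ring_1^'n^'m"
  shows "A *v (- x) = - (A *v x)"
  using matrix_vector_mult_diff_distrib[of A 0 x] by simp

lemma sdprod_carrier [simp]: "carrier (sdprod A) = UNIV"
  by (simp add: sdprod_def)

lemma sdprod_one [simp]: "\<one>\<^bsub>sdprod A\<^esub> = (0, 0)"
  by (simp add: sdprod_def)

lemma sdprod_mult [simp]: "(v, k) \<otimes>\<^bsub>sdprod A\<^esub> (w, j) = (v + mat_ipow A k *v w, k + j)"
  by (simp add: sdprod_def)

lemma sdprod_inv:
  assumes "invertible A"
  shows "inv\<^bsub>sdprod A\<^esub> (v, k) = (- (mat_ipow A (- k) *v v), - k)"
  unfolding m_inv_def
proof (rule the_equality)
  show "(- (mat_ipow A (- k) *v v), - k) \<in> carrier (sdprod A) \<and>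
      (v, k) \<otimes>\<^bsub>sdprod A\<^esub> (- (mat_ipow A (- k) *v v), - k) = \<one>\<^bsub>sdprod A\<^esub> \<and>
      (- (mat_ipow A (- k) *v v), - k) \<otimes>\<^bsub>sdprod A\<^esub> (v, k) = \<one>\<^bsub>sdprod A\<^esub>"
    using mat_ipow_mult_mat_ipow_uminus[OF assms, of k]
    by (simp add: matrix_vector_mul_assoc matrix_vector_mult_uminus_right)
next
  fix y
  assume "y \<in> carrier (sdprod A) \<and> (v, k) \<otimes>\<^bsub>sdprod A\<^esub> y = \<one>\<^bsub>sdprod A\<^esub> \<and>
      y \<otimes>\<^bsub>sdprod A\<^esub> (v, k) = \<one>\<^bsub>sdprod A\<^esub>"
  moreover obtain w j where y: "y = (w, j)"
    by fastforce
  ultimately have "w + mat_ipow A j *v v = 0" and "j = - k"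
    by simp_all
  then show "y = (- (mat_ipow A (- k) *v v), - k)"
    by (simp add: y add_eq_0_iff2)
qed

lemma sdprod_nat_pow_fibre: "(v, 0) [^]\<^bsub>sdprod A\<^esub> (n::nat) = (of_nat n *s v, 0)"
  by (induction n) (auto simp: vec_eq_iff algebra_simps)

lemma sdprod_int_pow_fibre:
  assumes "invertible A"
  shows "(v, 0) [^]\<^bsub>sdprod A\<^esub> (k::int) = (of_int k *s v, 0)"
  by (simp add: int_pow_def2 sdprod_nat_pow_fibre sdprod_inv[OF assms] vec_eq_iff)

lemma length_function_sdprod_scale:
  assumes "invertible A" and "length_function (sdprod A) l"
  shows "l (of_int k *s v, 0) = \<bar>of_int k\<bar> * l (v, 0)"
proof -
  have "l ((v, 0) [^]\<^bsub>sdprod A\<^esub> k) = \<bar>of_int k\<bar> * l (v, 0)"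
    using assms(2) unfolding length_function_def sdprod_carrier by blast
  then show ?thesis
    by (simp add: sdprod_int_pow_fibre[OF assms(1)])
qed

lemma length_function_sdprod_add:
  assumes "length_function (sdprod A) l"
  shows "l (v + w, 0) \<le> l (v, 0) + l (w, 0)"
proof -
  have "(v, 0) \<otimes>\<^bsub>sdprod A\<^esub> (w, 0) = (w, 0) \<otimes>\<^bsub>sdprod A\<^esub> (v, 0)"
    by (simp add: add.commute)
  then have "l ((v, 0) \<otimes>\<^bsub>sdprod A\<^esub> (w, 0)) \<le> l (v, 0) + l (w, 0)"
    using assms unfolding length_function_def sdprod_carrier by blast
  then show ?thesis
    by simp
qed

lemma length_function_sdprod_action:
  assumes "invertible A" and "length_function (sdprod A) l"
  shows "l (A *v v, 0) = l (v, 0)"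
proof -
  have "(0, 1) \<otimes>\<^bsub>sdprod A\<^esub> (v, 0) \<otimes>\<^bsub>sdprod A\<^esub> inv\<^bsub>sdprod A\<^esub> (0, 1) = (A *v v, 0)"
    by (simp add: sdprod_inv[OF assms(1)])
  then show ?thesis
    using assms(2) unfolding length_function_def sdprod_carrier by (metis UNIV_I)
qed

lemma purely_positive_sdprod_fibre:
  assumes "purely_positive (sdprod A) l" and "v \<noteq> 0"
  shows "0 < l (v, 0)"
proof -
  have "infinite_order (sdprod A) (v, 0)"
    using assms(2) by (auto simp: infinite_order_def sdprod_nat_pow_fibre vec_eq_iff)
  then show ?thesis
    using assms(1) by (simp add: purely_positive_def)
qed

lemma finite_sublevel_if_discrete:
  fixes L :: "int^'n \<Rightarrow> real"
  assumes scale: "\<And>k v. L (of_int k *s v) = \<bar>of_int k\<bar> * L v"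
    and add: "\<And>v w. L (v + w) \<le> L v + L w"
    and gap: "\<And>v. v \<noteq> 0 \<Longrightarrow> c \<le> L v"
    and "c > 0"
  shows "finite {v. L v \<le> R}"
proof (rule ccontr)
  define S where "S = {v. L v \<le> R}"
  assume "infinite {v. L v \<le> R}"
  then have "infinite S"
    by (simp add: S_def)
  define q :: nat where "q = nat \<lceil>2 * R / c\<rceil> + 1"
  have "q > 0"
    by (simp add: q_def)
  have "2 * R / c < real q"
    unfolding q_def by linarith
  then have q_large: "2 * R < real q * c"
    using \<open>c > 0\<close> by (simp add: divide_less_eq)
  define residues where "residues v = (\<lambda>i. v $ i mod int q)" for v :: "int^'n"
  have "residues ` S \<subseteq> Pi\<^sub>E UNIV (\<lambda>_. {0..<int q})"
    using \<open>q > 0\<close> by (auto simp: residues_def PiE_UNIV_domain)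
  then have "finite (residues ` S)"
    by (rule finite_subset) (simp add: finite_PiE)
  then have "\<not> inj_on residues S"
    using \<open>infinite S\<close> finite_imageD by blast
  then obtain v w where vw: "v \<in> S" "w \<in> S" "v \<noteq> w" "residues v = residues w"
    unfolding inj_on_def by blast
  define u where "u = (\<chi> i. (v $ i - w $ i) div int q)"
  have "int q dvd v $ i - w $ i" for i
    using fun_cong[OF vw(4), of i] by (simp add: residues_def mod_eq_dvd_iff)
  then have v_w: "v - w = of_int (int q) *s u"
    by (simp add: u_def vec_eq_iff)
  then have "u \<noteq> 0"
    using vw(3) by auto
  have "real q * c \<le> real q * L u"
    using gap[OF \<open>u \<noteq> 0\<close>] by (simp add: mult_left_mono)
  also have "\<dots> = L (v - w)"
    using scale[of "int q" u] v_w by simp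
  also have "\<dots> \<le> L v + L (- w)"
    using add[of v "- w"] by simp
  also have "\<dots> \<le> 2 * R"
    using vw(1,2) scale[of "- 1" w] by (simp add: S_def flip: vector_sneg_minus1)
  finally show False
    using q_large by simp
qed

lemma matrix_vector_mult_axis_nth: "(M *v axis j 1) $ i = M $ i $ j"
  by (simp add: matrix_vector_mult_def axis_def if_distrib cong: if_cong)

lemma finite_range_mat_npow:
  fixes A :: "int^'n^'n" and L :: "int^'n \<Rightarrow> real"
  assumes fin: "\<And>R. finite {v. L v \<le> R}"
    and invariant: "\<And>v. L (A *v v) = L v"
  shows "finite (range (mat_npow A))"
proof -
  define R where "R = Max (range (\<lambda>j. L (axis j 1)))"
  define columns where "columns M = (\<lambda>j. M *v axis j 1)" for M :: "int^'n^'n"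
  have "L (mat_npow A k *v v) = L v" for k v
    by (induction k arbitrary: v) (simp_all add: matrix_vector_mul_assoc[symmetric] invariant)
  then have "columns ` range (mat_npow A) \<subseteq> Pi\<^sub>E UNIV (\<lambda>_. {v. L v \<le> R})"
    by (auto simp: columns_def PiE_UNIV_domain R_def)
  then have "finite (columns ` range (mat_npow A))"
    by (rule finite_subset) (simp add: finite_PiE fin)
  moreover have "inj columns"
    by (rule injI) (simp add: columns_def fun_eq_iff vec_eq_iff flip: matrix_vector_mult_axis_nth)
  ultimately show ?thesis
    using finite_imageD inj_on_subset by blast
qed

lemma finite_order_if_finite_range_mat_npow:
  fixes A :: "int^'n^'n"
  assumes "invertible A" and "finite (range (mat_npow A))"
  shows "\<exists>m>0. mat_npow A m = mat 1"
proof -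
  have "\<not> inj (mat_npow A)"
    using assms(2) finite_imageD infinite_UNIV_nat by blast
  then obtain a b where "a < b" and ab: "mat_npow A a = mat_npow A b"
    unfolding inj_def by (metis linorder_neqE_nat)
  let ?B = "matrix_inv A"
  have "mat 1 = mat_npow ?B a ** mat_npow A b"
    using mat_npow_cancel[OF matrix_inv_left[OF assms(1)]] by (simp flip: ab)
  also have "\<dots> = mat_npow ?B a ** mat_npow A a ** mat_npow A (b - a)"
    using \<open>a < b\<close> mat_npow_add[of A a "b - a"] by (simp add: matrix_mul_assoc)
  also have "\<dots> = mat_npow A (b - a)"
    using mat_npow_cancel[OF matrix_inv_left[OF assms(1)]] by simp
  finally show ?thesis
    using \<open>a < b\<close> by (metis zero_less_diff)
qed

lemma virtually_abelian_sdprod_if_mat_npow_eq_mat_1: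
  fixes A :: "int^'n^'n"
  assumes "invertible A" and "m > 0" and "mat_npow A m = mat 1"
  shows "virtually_abelian (sdprod A)"
proof -
  define H :: "((int^'n) \<times> int) set" where "H = {(v, k). int m dvd k}"
  have acts_trivially: "int m dvd k \<Longrightarrow> mat_ipow A k = mat 1" for k
    using mat_ipow_eq_mat_1[OF assms(1,3)] by blast
  have "subgroup H (sdprod A)"
    by standard (auto simp: H_def sdprod_inv[OF assms(1)])
  moreover have "\<forall>x\<in>H. \<forall>y\<in>H. x \<otimes>\<^bsub>sdprod A\<^esub> y = y \<otimes>\<^bsub>sdprod A\<^esub> x"
    by (auto simp: H_def acts_trivially add.commute)
  moreover have "H #>\<^bsub>sdprod A\<^esub> (v, k) = {(u, i). i mod int m = k mod int m}" for v k
  proof (intro equalityI subsetI)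
    fix x :: "(int^'n) \<times> int"
    assume "x \<in> H #>\<^bsub>sdprod A\<^esub> (v, k)"
    then show "x \<in> {(u, i). i mod int m = k mod int m}"
      by (auto simp: r_coset_def H_def)
  next
    fix x :: "(int^'n) \<times> int"
    assume "x \<in> {(u, i). i mod int m = k mod int m}"
    then obtain u i where x: "x = (u, i)" and "int m dvd i - k"
      by (auto simp: mod_eq_dvd_iff)
    then have "(u - v, i - k) \<in> H" and "(u - v, i - k) \<otimes>\<^bsub>sdprod A\<^esub> (v, k) = x"
      by (simp_all add: H_def acts_trivially)
    then show "x \<in> H #>\<^bsub>sdprod A\<^esub> (v, k)"
      unfolding r_coset_def by force
  qed
  then have "rcosets\<^bsub>sdprod A\<^esub> H \<subseteq> (\<lambda>r. {(u, i). i mod int m = r}) ` {0..<int m}"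
    using \<open>m > 0\<close> by (auto simp: RCOSETS_def)
  then have "finite (rcosets\<^bsub>sdprod A\<^esub> H)"
    by (rule finite_subset) simp
  ultimately show ?thesis
    unfolding virtually_abelian_def by blast
qed

theorem lemma11:
  fixes A :: "int^'n^'n"
    and l :: "(int^'n) \<times> int \<Rightarrow> real"
  assumes "invertible A"
    and "length_function (sdprod A) l"
    and "discrete_length (sdprod A) l"
    and "purely_positive (sdprod A) l"
  shows "virtually_abelian (sdprod A)"
proof -
  obtain c where "c > 0" and c: "\<And>g. l g \<noteq> 0 \<Longrightarrow> c < l g"
    using assms(3) by (auto simp: discrete_length_def)
  have "c \<le> l (v, 0)" if "v \<noteq> 0" for v
    using c[of "(v, 0)"] purely_positive_sdprod_fibre[OF assms(4) that] by fastforce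
  then have "finite {v. l (v, 0) \<le> R}" for R
    using finite_sublevel_if_discrete[where L = "\<lambda>v. l (v, 0)"] \<open>c > 0\<close>
      length_function_sdprod_scale[OF assms(1,2)] length_function_sdprod_add[OF assms(2)]
    by blast
  then have "finite (range (mat_npow A))"
    using finite_range_mat_npow[where L = "\<lambda>v. l (v, 0)"]
      length_function_sdprod_action[OF assms(1,2)]
    by blast
  then obtain m where "m > 0" and "mat_npow A m = mat 1"
    using finite_order_if_finite_range_mat_npow[OF assms(1)] by blast
  then show ?thesis
    using virtually_abelian_sdprod_if_mat_npow_eq_mat_1[OF assms(1)] by blast
qed

end
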